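(* Let $G=(V,E)$ be a simple 2-vertex-connected graph and let $e=uv\in E$ be an irrelevant edge of $G$. Then there exists a minimum-size 2-edge-connected spanning subgraph of $G$ not containing $e$.
   Context: A $k$-vertex-cut of $G$ is a set of $k$ nodes whose removal leaves a graph with at least two connected components; $G$ is 2-vertex-connected (2VC) if it has at least 3 nodes, is connected, and has no 1-vertex-cut. An edge $uv\in E$ is irrelevant if $\{u,v\}$ is a 2-vertex-cut of $G$. A graph is 2-edge-connected (2EC) if it is connected and remains connected after removing any single edge; a spanning subgraph is a subgraph on all nodes of $V$, identified with its edge set. *)

theory Defs
  imports Main
begin

definition simple_graph :: "'a set \<Rightarrow> 'a set set \<Rightarrow> bool" where
  "simple_graph V E \<longleftrightarrow> finite V \<and>
     (\<forall>e\<in>E. \<exists>u v. e = {u, v} \<and> u \<noteq> v \<and> u \<in> V \<and> v \<in> V)"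

definition adj :: "'a set set \<Rightarrow> 'a \<Rightarrow> 'a \<Rightarrow> bool" where
  "adj F x y \<longleftrightarrow> {x, y} \<in> F \<and> x \<noteq> y"

definition reach :: "'a set set \<Rightarrow> 'a \<Rightarrow> 'a \<Rightarrow> bool" where
  "reach F = (adj F)\<^sup>*\<^sup>*"

definition connected_graph :: "'a set \<Rightarrow> 'a set set \<Rightarrow> bool" where
  "connected_graph V F \<longleftrightarrow> V \<noteq> {} \<and> (\<forall>x\<in>V. \<forall>y\<in>V. reach F x y)"

definition del_vertices_E :: "'a set set \<Rightarrow> 'a set \<Rightarrow> 'a set set" where
  "del_vertices_E E S = {e \<in> E. e \<inter> S = {}}"

definition vertex_cut :: "'a set \<Rightarrow> 'a set set \<Rightarrow> nat \<Rightarrow> 'a set \<Rightarrow> bool" where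
  "vertex_cut V E k S \<longleftrightarrow> S \<subseteq> V \<and> card S = k \<and>
     (\<exists>x\<in>V - S. \<exists>y\<in>V - S. \<not> reach (del_vertices_E E S) x y)"

definition two_vertex_connected :: "'a set \<Rightarrow> 'a set set \<Rightarrow> bool" where
  "two_vertex_connected V E \<longleftrightarrow> card V \<ge> 3 \<and> connected_graph V E \<and>
     \<not> (\<exists>S. vertex_cut V E 1 S)"

definition irrelevant_edge :: "'a set \<Rightarrow> 'a set set \<Rightarrow> 'a \<Rightarrow> 'a \<Rightarrow> bool" where
  "irrelevant_edge V E u v \<longleftrightarrow> {u, v} \<in> E \<and> vertex_cut V E 2 {u, v}"

definition two_edge_connected :: "'a set \<Rightarrow> 'a set set \<Rightarrow> bool" where
  "two_edge_connected V F \<longleftrightarrow> connected_graph V F \<and>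
     (\<forall>e\<in>F. connected_graph V (F - {e}))"

definition spanning_2ec :: "'a set \<Rightarrow> 'a set set \<Rightarrow> 'a set set \<Rightarrow> bool" where
  "spanning_2ec V E H \<longleftrightarrow> H \<subseteq> E \<and> two_edge_connected V H"

definition min_2ecss :: "'a set \<Rightarrow> 'a set set \<Rightarrow> 'a set set \<Rightarrow> bool" where
  "min_2ecss V E H \<longleftrightarrow> spanning_2ec V E H \<and>
     (\<forall>H'. spanning_2ec V E H' \<longrightarrow> card H \<le> card H')"

end

theory Submission
  imports Defs
begin

text \<open>Take a minimum 2-edge-connected spanning subgraph H containing the irrelevant edge uv.
  Call a set S with u in S and v outside tight with edge h if H - uv has no edge leaving S other
  than h; every cut of H - uv with at most one edge is, up to complement, of this form. Since
  {u, v} is a 2-vertex-cut, G - {u, v} has at least two components, and two tight edges cannot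
  meet different components without producing a nonempty vertex set left by only one edge of H.
  So some component D meets no tight edge. Every vertex of D is joined to u or to v by a path of
  H running inside D; as neither u nor v is a cut vertex, G has an edge g other than uv from the
  part of D + u attached to u to the part of D + v attached to v. Every tight set contains the
  first part and misses the second, so g crosses all tight sets, and H - uv + g is a
  2-edge-connected spanning subgraph no larger than H.\<close>

lemma adj_sym: "adj F x y \<Longrightarrow> adj F y x"
  unfolding adj_def by (auto simp: insert_commute)

lemma reach_refl [simp]: "reach F x x"
  by (simp add: reach_def)

lemma reach_step: "reach F x y \<Longrightarrow> adj F y z \<Longrightarrow> reach F x z"
  unfolding reach_def by (rule rtranclp.rtrancl_into_rtrancl)

lemma reach_trans: "reach F x y \<Longrightarrow> reach F y z \<Longrightarrow> reach F x z"
  unfolding reach_def by (rule rtranclp_trans)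

lemma reach_sym: "reach F x y \<Longrightarrow> reach F y x"
  unfolding reach_def
  by (induction rule: rtranclp_induct) (auto intro: converse_rtranclp_into_rtranclp adj_sym)

lemma reach_mono: "F \<subseteq> G \<Longrightarrow> reach F x y \<Longrightarrow> reach G x y"
  unfolding reach_def
  by (erule rtranclp_mono[THEN predicate2D, rotated]) (auto simp: adj_def)

definition cut_edges :: "'a set set \<Rightarrow> 'a set \<Rightarrow> 'a set set" where
  "cut_edges F S = {f \<in> F. \<exists>a b. f = {a, b} \<and> a \<in> S \<and> b \<notin> S}"

lemma cut_edges_mono: "F \<subseteq> G \<Longrightarrow> cut_edges F S \<subseteq> cut_edges G S"
  unfolding cut_edges_def by blast

lemma cut_edges_Diff: "cut_edges (F - X) S = cut_edges F S - X"
  unfolding cut_edges_def by blast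

lemma reach_cut_edges_nonempty:
  "reach F x y \<Longrightarrow> x \<in> S \<Longrightarrow> y \<notin> S \<Longrightarrow> cut_edges F S \<noteq> {}"
  unfolding reach_def
  by (induction rule: rtranclp_induct) (auto simp: adj_def cut_edges_def)

lemma simple_graph_subset: "simple_graph V E \<Longrightarrow> F \<subseteq> E \<Longrightarrow> simple_graph V F"
  unfolding simple_graph_def by blast

lemma simple_graph_edgeD:
  assumes "simple_graph V F" "{a, b} \<in> F"
  shows "a \<in> V \<and> b \<in> V \<and> a \<noteq> b"
proof -
  obtain p q where "{a, b} = {p, q}" "p \<noteq> q" "p \<in> V" "q \<in> V"
    using assms unfolding simple_graph_def by meson
  then show ?thesis by (auto simp: doubleton_eq_iff)
qed

lemma simple_graph_finite_edges:
  assumes "simple_graph V E"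
  shows "finite E"
proof (rule finite_subset)
  show "E \<subseteq> Pow V" using assms unfolding simple_graph_def by fastforce
  show "finite (Pow V)" using assms unfolding simple_graph_def by simp
qed

lemma cut_edges_compl:
  assumes "simple_graph V F" "S \<subseteq> V"
  shows "cut_edges F (V - S) = cut_edges F S"
proof -
  have "f \<in> cut_edges F T" if f: "f \<in> cut_edges F (V - T)" for f T
  proof -
    obtain a b where ab: "f \<in> F" "f = {a, b}" "a \<in> V - T" "b \<notin> V - T"
      using f unfolding cut_edges_def by blast
    then have "b \<in> T" using simple_graph_edgeD[OF assms(1)] by blast
    moreover have "f = {b, a}" using ab(2) by (simp add: insert_commute)
    ultimately show ?thesis using ab unfolding cut_edges_def by blast
  qed
  from this[of _ S] this[of _ "V - S"] assms(2) show ?thesis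
    by (auto simp: double_diff)
qed

lemma connected_graph_mono:
  assumes "F \<subseteq> G" "connected_graph V F"
  shows "connected_graph V G"
  using assms(2) reach_mono[OF assms(1)] by (simp add: connected_graph_def)

lemma connected_graph_iff_cut_edges:
  assumes "simple_graph V F"
  shows "connected_graph V F \<longleftrightarrow>
    V \<noteq> {} \<and> (\<forall>S\<subseteq>V. S \<noteq> {} \<longrightarrow> S \<noteq> V \<longrightarrow> cut_edges F S \<noteq> {})"
proof
  assume conn: "connected_graph V F"
  show "V \<noteq> {} \<and> (\<forall>S\<subseteq>V. S \<noteq> {} \<longrightarrow> S \<noteq> V \<longrightarrow> cut_edges F S \<noteq> {})"
  proof (intro conjI allI impI)
    show "V \<noteq> {}" using conn by (simp add: connected_graph_def)
    fix S assume "S \<subseteq> V" "S \<noteq> {}" "S \<noteq> V"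
    then obtain x y where xy: "x \<in> S" "y \<in> V" "y \<notin> S" by blast
    with \<open>S \<subseteq> V\<close> have "reach F x y" using conn by (auto simp: connected_graph_def)
    from reach_cut_edges_nonempty[OF this xy(1,3)] show "cut_edges F S \<noteq> {}" .
  qed
next
  assume cuts: "V \<noteq> {} \<and> (\<forall>S\<subseteq>V. S \<noteq> {} \<longrightarrow> S \<noteq> V \<longrightarrow> cut_edges F S \<noteq> {})"
  show "connected_graph V F" unfolding connected_graph_def
  proof (intro conjI ballI)
    show "V \<noteq> {}" using cuts by blast
    fix x y assume "x \<in> V" "y \<in> V"
    define S where "S = {z \<in> V. reach F x z}"
    show "reach F x y"
    proof (rule ccontr)
      assume "\<not> reach F x y"
      then have "S \<subseteq> V" "S \<noteq> {}" "S \<noteq> V"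
        using \<open>x \<in> V\<close> \<open>y \<in> V\<close> by (auto simp: S_def)
      with cuts have "cut_edges F S \<noteq> {}" by simp
      then obtain a b where ab: "{a, b} \<in> F" "a \<in> S" "b \<notin> S"
        unfolding cut_edges_def by blast
      have "adj F a b" "b \<in> V"
        using simple_graph_edgeD[OF assms ab(1)] ab(1) by (auto simp: adj_def)
      moreover have "reach F x a" using ab(2) by (simp add: S_def)
      ultimately have "b \<in> S" using reach_step by (simp add: S_def)
      with ab(3) show False ..
    qed
  qed
qed

lemma two_edge_connected_iff_connected_Diff:
  "two_edge_connected V F \<longleftrightarrow> (\<forall>h. connected_graph V (F - {h}))"
proof
  assume "two_edge_connected V F"
  then show "\<forall>h. connected_graph V (F - {h})"
    unfolding two_edge_connected_def by (metis Diff_empty Diff_insert0)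
next
  assume "\<forall>h. connected_graph V (F - {h})"
  then show "two_edge_connected V F"
    unfolding two_edge_connected_def by (blast intro: connected_graph_mono[OF Diff_subset])
qed

lemma two_edge_connected_iff_cut_edges:
  assumes "simple_graph V F"
  shows "two_edge_connected V F \<longleftrightarrow>
    V \<noteq> {} \<and> (\<forall>S\<subseteq>V. S \<noteq> {} \<longrightarrow> S \<noteq> V \<longrightarrow> (\<forall>h. \<not> cut_edges F S \<subseteq> {h}))"
proof -
  have "connected_graph V (F - {h}) \<longleftrightarrow>
      V \<noteq> {} \<and> (\<forall>S\<subseteq>V. S \<noteq> {} \<longrightarrow> S \<noteq> V \<longrightarrow> \<not> cut_edges F S \<subseteq> {h})" for h
    using connected_graph_iff_cut_edges[OF simple_graph_subset[OF assms Diff_subset]]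
    by (simp add: cut_edges_Diff)
  then show ?thesis
    unfolding two_edge_connected_iff_connected_Diff by (simp add: all_conj_distrib) blast
qed

lemma reach_avoiding_vertex:
  assumes "two_vertex_connected V E" "a \<in> V" "x \<in> V - {a}" "y \<in> V - {a}"
  shows "reach (del_vertices_E E {a}) x y"
proof (rule ccontr)
  assume "\<not> reach (del_vertices_E E {a}) x y"
  with assms(2-4) have "vertex_cut V E 1 {a}" unfolding vertex_cut_def by auto
  with assms(1) show False unfolding two_vertex_connected_def by blast
qed

lemma two_vertex_connected_imp_two_edge_connected:
  assumes simple: "simple_graph V E" and two_vc: "two_vertex_connected V E"
  shows "two_edge_connected V E"
  unfolding two_edge_connected_def
proof (intro conjI ballI)
  show "connected_graph V E" using two_vc by (simp add: two_vertex_connected_def)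
  fix f assume "f \<in> E"
  then obtain a b where ab: "f = {a, b}" "a \<noteq> b" "a \<in> V" "b \<in> V"
    using simple unfolding simple_graph_def by meson
  have "\<not> V \<subseteq> {a, b}"
  proof
    assume "V \<subseteq> {a, b}"
    then have "card V \<le> card {a, b}" by (intro card_mono) auto
    also have "\<dots> \<le> 2" by (simp add: card_insert_if)
    finally have "card V \<le> 2" .
    with two_vc show False by (simp add: two_vertex_connected_def)
  qed
  then obtain w where w: "w \<in> V" "w \<noteq> a" "w \<noteq> b" by blast
  have "reach (E - {f}) z w" if "z \<in> V" for z
  proof -
    obtain d where "d \<in> {a, b}" "z \<noteq> d" using ab by blast
    then have "reach (del_vertices_E E {d}) z w"
      using reach_avoiding_vertex[OF two_vc] ab w \<open>z \<in> V\<close> by blast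
    moreover have "del_vertices_E E {d} \<subseteq> E - {f}"
      using \<open>d \<in> {a, b}\<close> ab(1) by (auto simp: del_vertices_E_def)
    ultimately show ?thesis by (rule reach_mono[rotated])
  qed
  then show "connected_graph V (E - {f})"
    unfolding connected_graph_def using w(1) by (blast intro: reach_trans reach_sym)
qed

lemma min_2ecss_exists:
  assumes "simple_graph V E" "two_vertex_connected V E"
  shows "\<exists>H. min_2ecss V E H"
proof -
  have "spanning_2ec V E E"
    using two_vertex_connected_imp_two_edge_connected[OF assms] by (simp add: spanning_2ec_def)
  then show ?thesis
    unfolding min_2ecss_def using ex_has_least_nat[of "spanning_2ec V E" E card] by blast
qed

locale irrelevant_edge_in_2ecss =
  fixes V :: "'a set" and E H :: "'a set set" and u v :: 'a
  assumes simple: "simple_graph V E"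
    and two_vc: "two_vertex_connected V E"
    and irrelevant: "irrelevant_edge V E u v"
    and spanning: "spanning_2ec V E H"
    and uv_in_H: "{u, v} \<in> H"
begin

abbreviation E_uv :: "'a set set" where
  "E_uv \<equiv> del_vertices_E E {u, v}"

definition component :: "'a \<Rightarrow> 'a set" where
  "component c = {y \<in> V - {u, v}. reach E_uv c y}"

definition tight :: "'a set \<Rightarrow> 'a set \<Rightarrow> bool" where
  "tight S h \<longleftrightarrow> S \<subseteq> V \<and> u \<in> S \<and> v \<notin> S \<and> cut_edges (H - {{u, v}}) S \<subseteq> {h}"

lemma H_subset: "H \<subseteq> E"
  using spanning by (simp add: spanning_2ec_def)

lemma H_simple: "simple_graph V H"
  using simple H_subset by (rule simple_graph_subset)

lemma u_v: "u \<in> V" "v \<in> V" "u \<noteq> v"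
  using simple_graph_edgeD[OF H_simple uv_in_H] by auto

lemma H_cut_edges:
  assumes "S \<subseteq> V" "S \<noteq> {}" "S \<noteq> V"
  shows "\<not> cut_edges H S \<subseteq> {h}"
  using spanning assms
  unfolding spanning_2ec_def two_edge_connected_iff_cut_edges[OF H_simple] by blast

lemma cut_edges_H_subset: "cut_edges H S \<subseteq> insert {u, v} (cut_edges (H - {{u, v}}) S)"
  by (auto simp: cut_edges_Diff)

lemma component_subset: "component c \<subseteq> V - {u, v}"
  by (auto simp: component_def)

lemma component_closed:
  assumes "a \<in> component c" "{a, b} \<in> E" "b \<in> V - {u, v}"
  shows "b \<in> component c"
proof -
  have "{a, b} \<in> E_uv" using assms component_subset by (auto simp: del_vertices_E_def)
  then have "adj E_uv a b" using simple_graph_edgeD[OF simple assms(2)] by (simp add: adj_def)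
  moreover have "reach E_uv c a" using assms(1) by (simp add: component_def)
  ultimately show ?thesis using assms(3) reach_step by (simp add: component_def)
qed

lemma reach_if_edge_meets_components:
  assumes "f \<in> E" "f \<inter> component c \<noteq> {}" "f \<inter> component d \<noteq> {}"
  shows "reach E_uv c d"
proof -
  obtain p q where p: "p \<in> f" "p \<in> component c" and q: "q \<in> f" "q \<in> component d"
    using assms(2,3) by blast
  obtain a b where f: "f = {a, b}"
    using simple assms(1) unfolding simple_graph_def by meson
  have "q \<in> component c"
  proof (cases "p = q")
    case False
    then have "f = {p, q}" using f p(1) q(1) by auto
    then show ?thesis using component_closed[OF p(2)] assms(1) q(2) component_subset by blast
  qed (use p in simp)
  then have "reach E_uv c q" "reach E_uv d q" using q(2) by (simp_all add: component_def)
  then show ?thesis by (blast intro: reach_trans reach_sym)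
qed

lemma tight_edge_in_cut:
  assumes "tight S h"
  shows "h \<in> cut_edges (H - {{u, v}}) S"
proof (rule ccontr)
  assume "h \<notin> cut_edges (H - {{u, v}}) S"
  with assms have "cut_edges H S \<subseteq> {{u, v}}"
    using cut_edges_H_subset[of S] by (auto simp: tight_def)
  moreover have "S \<subseteq> V" "S \<noteq> {}" "S \<noteq> V" using assms u_v by (auto simp: tight_def)
  ultimately show False using H_cut_edges by blast
qed

lemma tight_cut_edges_H:
  "tight S h \<Longrightarrow> cut_edges H S \<subseteq> {{u, v}, h}"
  using cut_edges_H_subset[of S] by (auto simp: tight_def)

text \<open>Only f and f' can leave component c \<inter> (P - Q), and at most one of them meets it.\<close>

lemma component_inter_diff_empty:
  assumes "P \<subseteq> V" "u \<notin> P - Q" "v \<notin> P - Q"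
    and cut_P: "cut_edges H P \<subseteq> {{u, v}, f}" and cut_Q: "cut_edges H Q \<subseteq> {{u, v}, f'}"
    and "f \<inter> component c = {} \<or> f' \<inter> component c = {}"
  shows "component c \<inter> (P - Q) = {}"
proof (rule ccontr)
  define W where "W = component c \<inter> (P - Q)"
  assume "W \<noteq> {}"
  have leave: "g \<in> {f, f'} \<and> g \<inter> component c \<noteq> {}" if g: "g \<in> cut_edges H W" for g
  proof -
    obtain w x where wx: "g \<in> H" "g = {w, x}" "w \<in> W" "x \<notin> W"
      using g unfolding cut_edges_def by blast
    have w: "w \<in> component c" "w \<in> P" "w \<notin> Q" using wx(3) by (auto simp: W_def)
    have "g \<noteq> {u, v}" using wx(2) w(1) component_subset by (auto simp: doubleton_eq_iff)
    moreover have "g \<inter> component c \<noteq> {}" using wx(2) w(1) by blast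
    moreover have "g \<in> cut_edges H P \<or> g \<in> cut_edges H Q"
    proof (cases "x \<in> P")
      case False
      with wx w show ?thesis unfolding cut_edges_def by blast
    next
      case True
      have "x \<in> V" using simple_graph_edgeD[OF H_simple] wx(1,2) by blast
      have "x \<in> Q"
      proof (rule ccontr)
        assume "x \<notin> Q"
        with True \<open>x \<in> V\<close> assms(2,3) have "x \<in> V - {u, v}" by blast
        then have "x \<in> component c"
          using component_closed[OF w(1)] wx(1,2) H_subset by blast
        with True \<open>x \<notin> Q\<close> wx(4) show False by (simp add: W_def)
      qed
      moreover have "g = {x, w}" using wx(2) by (simp add: insert_commute)
      ultimately show ?thesis using wx(1) w(3) unfolding cut_edges_def by blast
    qed
    ultimately show ?thesis using cut_P cut_Q by blast
  qed
  then have "cut_edges H W \<subseteq> {f} \<or> cut_edges H W \<subseteq> {f'}"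
    using assms(6) by blast
  moreover have "W \<subseteq> V" "W \<noteq> V" using assms(1) u_v(1) component_subset by (auto simp: W_def)
  ultimately show False using H_cut_edges \<open>W \<noteq> {}\<close> by blast
qed

lemma tight_edge_meets_component:
  assumes tight_S: "tight S f" and tight_S': "tight S' f'" and f: "f \<inter> component c \<noteq> {}"
  shows "f' \<inter> component c \<noteq> {}"
proof
  assume f': "f' \<inter> component c = {}"
  obtain a b where ab: "f \<in> H" "f \<noteq> {u, v}" "f = {a, b}" "a \<in> S" "b \<notin> S"
    using tight_edge_in_cut[OF tight_S] unfolding cut_edges_def by blast
  have "a \<in> V" "b \<in> V" using simple_graph_edgeD[OF H_simple] ab(1,3) by blast+
  have S: "u \<in> S" "v \<notin> S" "u \<in> S'" "v \<notin> S'" "S \<subseteq> V" "S' \<subseteq> V"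
    using tight_S tight_S' by (auto simp: tight_def)
  have cut_S: "cut_edges H S \<subseteq> {{u, v}, f}" and cut_S': "cut_edges H S' \<subseteq> {{u, v}, f'}"
    using tight_S tight_S' by (simp_all add: tight_cut_edges_H)
  have "f \<noteq> f'" using f f' by blast
  then have "f \<notin> cut_edges H S'" using cut_S' ab(2) by blast
  then have "a \<in> S' \<longleftrightarrow> b \<in> S'"
    using ab(1,3) unfolding cut_edges_def by (auto simp: insert_commute)
  have "a \<in> component c \<or> b \<in> component c" using f ab(3) by blast
  show False
  proof (cases "a \<in> S'")
    case True
    then have "b \<in> S' - S" using \<open>a \<in> S' \<longleftrightarrow> b \<in> S'\<close> ab(5) by blast
    moreover have "b \<in> component c"
      using \<open>a \<in> component c \<or> b \<in> component c\<close> component_closed[of a c b] ab(1,3) H_subset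
        \<open>b \<in> V\<close> \<open>b \<in> S' - S\<close> S by blast
    moreover have "component c \<inter> (S' - S) = {}"
      using component_inter_diff_empty[OF S(6) _ _ cut_S' cut_S] f' S(1,4) by blast
    ultimately show False by blast
  next
    case False
    then have "a \<in> S - S'" using ab(4) by blast
    moreover have "{b, a} \<in> E" using ab(1,3) H_subset by (auto simp: insert_commute)
    then have "a \<in> component c"
      using \<open>a \<in> component c \<or> b \<in> component c\<close> component_closed[of b c a]
        \<open>a \<in> V\<close> \<open>a \<in> S - S'\<close> S by blast
    moreover have "component c \<inter> (S - S') = {}"
      using component_inter_diff_empty[OF S(5) _ _ cut_S cut_S'] f' S(2,3) by blast
    ultimately show False by blast
  qed
qed

lemma exists_component_avoiding_tight_edges:
  "\<exists>c\<in>V - {u, v}. \<forall>S h. tight S h \<longrightarrow> h \<inter> component c = {}"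
proof (rule ccontr)
  assume none: "\<not> ?thesis"
  have "vertex_cut V E 2 {u, v}" using irrelevant by (simp add: irrelevant_edge_def)
  then obtain x y where x: "x \<in> V - {u, v}" and y: "y \<in> V - {u, v}" and "\<not> reach E_uv x y"
    unfolding vertex_cut_def by blast
  have meets: "\<exists>S h. tight S h \<and> h \<inter> component c \<noteq> {}" if "c \<in> V - {u, v}" for c
    using none that by auto
  obtain S h where "tight S h" "h \<inter> component x \<noteq> {}" using meets[OF x] by blast
  obtain S' h' where "tight S' h'" "h' \<inter> component y \<noteq> {}" using meets[OF y] by blast
  have "h' \<inter> component x \<noteq> {}"
    using tight_edge_meets_component[OF \<open>tight S h\<close> \<open>tight S' h'\<close>] \<open>h \<inter> component x \<noteq> {}\<close> .
  moreover have "h' \<in> E"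
    using tight_edge_in_cut[OF \<open>tight S' h'\<close>] H_subset unfolding cut_edges_def by blast
  ultimately have "reach E_uv x y"
    using reach_if_edge_meets_components \<open>h' \<inter> component y \<noteq> {}\<close> by blast
  with \<open>\<not> reach E_uv x y\<close> show False ..
qed

definition side :: "'a \<Rightarrow> 'a \<Rightarrow> 'a set" where
  "side c w = {x. reach {f \<in> H. f \<subseteq> component c \<union> {w}} w x}"

lemma side_subset: "side c w \<subseteq> component c \<union> {w}"
proof
  fix x assume "x \<in> side c w"
  then have reach_x: "reach {f \<in> H. f \<subseteq> component c \<union> {w}} w x" by (simp add: side_def)
  have no_cut: "cut_edges {f \<in> H. f \<subseteq> component c \<union> {w}} (component c \<union> {w}) = {}"
    by (auto simp: cut_edges_def)
  show "x \<in> component c \<union> {w}"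
  proof (rule ccontr)
    assume "x \<notin> component c \<union> {w}"
    from reach_cut_edges_nonempty[OF reach_x _ this] no_cut show False by simp
  qed
qed

lemma component_subset_sides: "component c \<subseteq> side c u \<union> side c v"
proof
  fix z assume z: "z \<in> component c"
  define HD where "HD = {f \<in> H. f \<subseteq> component c}"
  define R where "R = {y. reach HD z y}"
  have in_side: "z \<in> side c w"
    if "a \<in> R" "a \<in> component c" "{a, w} \<in> H" "a \<noteq> w" for a w
  proof -
    have "reach HD z a" using that(1) by (simp add: R_def)
    then have "reach {f \<in> H. f \<subseteq> component c \<union> {w}} z a"
      by (rule reach_mono[rotated]) (auto simp: HD_def)
    moreover have "adj {f \<in> H. f \<subseteq> component c \<union> {w}} a w"
      using that(2-4) by (simp add: adj_def)
    ultimately have "reach {f \<in> H. f \<subseteq> component c \<union> {w}} z w" by (rule reach_step)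
    then show ?thesis unfolding side_def by (blast intro: reach_sym)
  qed
  show "z \<in> side c u \<union> side c v"
  proof (rule ccontr)
    assume z_out: "z \<notin> side c u \<union> side c v"
    have R_sub: "R \<subseteq> component c"
    proof
      fix y assume "y \<in> R"
      then have "reach HD z y" by (simp add: R_def)
      moreover have "cut_edges HD (component c) = {}" by (auto simp: HD_def cut_edges_def)
      ultimately show "y \<in> component c" using reach_cut_edges_nonempty[OF _ z] by blast
    qed
    have "cut_edges H R = {}"
    proof (rule ccontr)
      assume "cut_edges H R \<noteq> {}"
      then obtain a b where ab: "{a, b} \<in> H" "a \<in> R" "b \<notin> R"
        unfolding cut_edges_def by blast
      have a: "a \<in> component c" using ab(2) R_sub by blast
      have "b \<in> V" "a \<noteq> b" using simple_graph_edgeD[OF H_simple ab(1)] by auto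
      consider "b \<in> component c" | "b \<in> {u, v}" | "b \<in> V - {u, v} - component c"
        using \<open>b \<in> V\<close> by blast
      then show False
      proof cases
        case 1
        then have "adj HD a b" using ab(1) a \<open>a \<noteq> b\<close> by (simp add: HD_def adj_def)
        then have "b \<in> R" using ab(2) reach_step by (simp add: R_def)
        with ab(3) show False ..
      next
        case 2
        then show False using in_side[OF ab(2) a ab(1) \<open>a \<noteq> b\<close>] z_out by blast
      next
        case 3
        then show False using component_closed[OF a] ab(1) H_subset by blast
      qed
    qed
    moreover have "z \<in> R" by (simp add: R_def)
    with R_sub have "R \<subseteq> V" "R \<noteq> {}" "R \<noteq> V" using component_subset u_v(1) by auto
    ultimately show False using H_cut_edges[of R] by simp
  qed
qed

lemma exists_edge_between_sides:
  assumes c: "c \<in> V - {u, v}"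
  shows "\<exists>x\<in>side c u. \<exists>y\<in>side c v. {x, y} \<in> E \<and> {x, y} \<noteq> {u, v}"
proof (cases "component c \<inter> side c u = {}")
  case False
  then obtain p where p: "p \<in> component c" "p \<in> side c u" by blast
  have "p \<in> V - {u}" "v \<in> V - {u}" using p(1) component_subset u_v by auto
  then have "reach (del_vertices_E E {u}) p v" by (rule reach_avoiding_vertex[OF two_vc u_v(1)])
  moreover note p(2)
  moreover have "v \<notin> side c u" using side_subset component_subset u_v(3) by blast
  ultimately have "cut_edges (del_vertices_E E {u}) (side c u) \<noteq> {}"
    by (rule reach_cut_edges_nonempty)
  then obtain a b where ab: "{a, b} \<in> E" "a \<noteq> u" "b \<noteq> u" "a \<in> side c u" "b \<notin> side c u"
    unfolding cut_edges_def del_vertices_E_def by blast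
  have a: "a \<in> component c" using ab(2,4) side_subset by blast
  have "b \<in> V" using simple_graph_edgeD[OF simple ab(1)] by blast
  have "b \<in> side c v"
  proof (cases "b = v")
    case True
    then show ?thesis by (simp add: side_def)
  next
    case False
    with \<open>b \<in> V\<close> ab(3) have "b \<in> component c" using component_closed[OF a ab(1)] by blast
    then show ?thesis using component_subset_sides ab(5) by blast
  qed
  moreover have "{a, b} \<noteq> {u, v}" using a ab(2) component_subset by (auto simp: doubleton_eq_iff)
  ultimately show ?thesis using ab(1,4) by blast
next
  case True
  have "c \<in> V - {v}" "u \<in> V - {v}" using c u_v by auto
  then have "reach (del_vertices_E E {v}) c u" by (rule reach_avoiding_vertex[OF two_vc u_v(2)])
  moreover have "c \<in> component c" using c by (simp add: component_def)
  moreover have "u \<notin> component c" using component_subset by blast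
  ultimately have "cut_edges (del_vertices_E E {v}) (component c) \<noteq> {}"
    by (rule reach_cut_edges_nonempty)
  then obtain a b where ab: "{a, b} \<in> E" "b \<noteq> v" "a \<in> component c" "b \<notin> component c"
    unfolding cut_edges_def del_vertices_E_def by blast
  have "b \<in> V" using simple_graph_edgeD[OF simple ab(1)] by blast
  then have "b = u" using component_closed[OF ab(3) ab(1)] ab(2,4) by blast
  have "a \<in> side c v" using component_subset_sides ab(3) True by blast
  moreover have "u \<in> side c u" by (simp add: side_def)
  moreover have "{u, a} \<in> E" using ab(1) \<open>b = u\<close> by (simp add: insert_commute)
  moreover have "{u, a} \<noteq> {u, v}" using ab(3) component_subset by (auto simp: doubleton_eq_iff)
  ultimately show ?thesis by blast
qed

lemma tight_cut_avoids_side_edges: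
  assumes "tight S h" "h \<inter> component c = {}" "w \<in> {u, v}"
  shows "cut_edges {f \<in> H. f \<subseteq> component c \<union> {w}} S = {}"
proof (rule ccontr)
  assume "cut_edges {f \<in> H. f \<subseteq> component c \<union> {w}} S \<noteq> {}"
  then obtain a b where ab: "{a, b} \<in> H" "{a, b} \<subseteq> component c \<union> {w}" "a \<in> S" "b \<notin> S"
    unfolding cut_edges_def by blast
  have "a \<noteq> b" using ab(3,4) by blast
  then have "{a, b} \<inter> component c \<noteq> {}" using ab(2) by blast
  moreover have "{a, b} \<noteq> {u, v}"
    using ab(2) component_subset assms(3) u_v(3) by (auto simp: doubleton_eq_iff)
  then have "{a, b} \<in> cut_edges (H - {{u, v}}) S" using ab(1,3,4) unfolding cut_edges_def by blast
  then have "{a, b} = h" using assms(1) by (auto simp: tight_def)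
  ultimately show False using assms(2) by blast
qed

lemma tight_cut_separates_sides:
  assumes "tight S h" "h \<inter> component c = {}"
  shows "side c u \<subseteq> S" "side c v \<subseteq> V - S"
proof -
  have "S \<subseteq> V" "u \<in> S" "v \<in> V - S" using assms(1) u_v by (auto simp: tight_def)
  have "x \<in> T"
    if "reach {f \<in> H. f \<subseteq> component c \<union> {w}} w x" "w \<in> T"
      "cut_edges {f \<in> H. f \<subseteq> component c \<union> {w}} T = {}" for w x T
    using reach_cut_edges_nonempty[OF that(1,2)] that(3) by blast
  moreover have "cut_edges {f \<in> H. f \<subseteq> component c \<union> {v}} (V - S) = {}"
    using cut_edges_compl[OF simple_graph_subset[OF H_simple] \<open>S \<subseteq> V\<close>]
      tight_cut_avoids_side_edges[OF assms] by auto
  ultimately show "side c u \<subseteq> S" "side c v \<subseteq> V - S"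
    using tight_cut_avoids_side_edges[OF assms] \<open>u \<in> S\<close> \<open>v \<in> V - S\<close>
    unfolding side_def by blast+
qed

lemma tight_or_compl_tight:
  assumes "S \<subseteq> V" "S \<noteq> {}" "S \<noteq> V" "cut_edges (H - {{u, v}}) S \<subseteq> {h}"
  shows "tight S h \<or> tight (V - S) h"
proof -
  have "\<not> cut_edges H S \<subseteq> {h}" using H_cut_edges assms(1-3) by blast
  then have "{u, v} \<in> cut_edges H S" using cut_edges_H_subset[of S] assms(4) by blast
  then have "u \<in> S \<and> v \<notin> S \<or> v \<in> S \<and> u \<notin> S"
    unfolding cut_edges_def by (auto simp: doubleton_eq_iff)
  moreover have "cut_edges (H - {{u, v}}) (V - S) = cut_edges (H - {{u, v}}) S"
    using cut_edges_compl[OF simple_graph_subset[OF H_simple Diff_subset] assms(1)] .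
  ultimately show ?thesis using assms(1,4) u_v by (auto simp: tight_def)
qed

lemma exists_exchange_edge:
  "\<exists>g\<in>E. g \<noteq> {u, v} \<and> spanning_2ec V E (insert g (H - {{u, v}}))"
proof -
  obtain c where c: "c \<in> V - {u, v}" and avoid: "\<And>S h. tight S h \<Longrightarrow> h \<inter> component c = {}"
    using exists_component_avoiding_tight_edges by blast
  obtain x y where xy: "x \<in> side c u" "y \<in> side c v" "{x, y} \<in> E" "{x, y} \<noteq> {u, v}"
    using exists_edge_between_sides[OF c] by blast
  define F where "F = insert {x, y} (H - {{u, v}})"
  have "F \<subseteq> E" using xy(3) H_subset by (auto simp: F_def)
  have "x \<in> component c \<or> y \<in> component c"
  proof (rule ccontr)
    assume "\<not> ?thesis"
    then have "x = u" "y = v" using xy(1,2) side_subset by blast+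
    with xy(4) show False by simp
  qed
  then have "{x, y} \<inter> component c \<noteq> {}" by blast
  have no_small_cut: "\<forall>S\<subseteq>V. S \<noteq> {} \<longrightarrow> S \<noteq> V \<longrightarrow> (\<forall>h. \<not> cut_edges F S \<subseteq> {h})"
  proof (intro allI impI notI)
    fix S h assume S: "S \<subseteq> V" "S \<noteq> {}" "S \<noteq> V" and cut: "cut_edges F S \<subseteq> {h}"
    have "H - {{u, v}} \<subseteq> F" by (auto simp: F_def)
    from cut_edges_mono[OF this] cut have "cut_edges (H - {{u, v}}) S \<subseteq> {h}" by (rule subset_trans)
    from tight_or_compl_tight[OF S this] obtain T where T: "tight T h" "T = S \<or> T = V - S"
      by blast
    have "cut_edges F T = cut_edges F S"
      using T(2) cut_edges_compl[OF simple_graph_subset[OF simple \<open>F \<subseteq> E\<close>] S(1)] by blast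
    have "x \<in> T" "y \<notin> T"
      using tight_cut_separates_sides[OF T(1) avoid[OF T(1)]] xy(1,2) by blast+
    then have "{x, y} \<in> cut_edges F T" unfolding cut_edges_def F_def by blast
    then have "{x, y} = h" using cut \<open>cut_edges F T = cut_edges F S\<close> by blast
    with avoid[OF T(1)] \<open>{x, y} \<inter> component c \<noteq> {}\<close> show False by blast
  qed
  have "two_edge_connected V F"
    unfolding two_edge_connected_iff_cut_edges[OF simple_graph_subset[OF simple \<open>F \<subseteq> E\<close>]]
    using u_v(1) no_small_cut by (intro conjI) auto
  with \<open>F \<subseteq> E\<close> have "spanning_2ec V E F" by (simp add: spanning_2ec_def)
  with xy(4) have "{x, y} \<noteq> {u, v} \<and> spanning_2ec V E (insert {x, y} (H - {{u, v}}))"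
    by (simp add: F_def)
  with xy(3) show ?thesis ..
qed

end

theorem lemma1:
  fixes V :: "'a set" and E :: "'a set set" and u v :: 'a
  assumes "simple_graph V E"
    and "two_vertex_connected V E"
    and "irrelevant_edge V E u v"
  shows "\<exists>H. min_2ecss V E H \<and> {u, v} \<notin> H"
proof -
  obtain H where H: "min_2ecss V E H"
    using min_2ecss_exists[OF assms(1,2)] by blast
  show ?thesis
  proof (cases "{u, v} \<in> H")
    case False
    with H show ?thesis by blast
  next
    case True
    have "spanning_2ec V E H" using H by (simp add: min_2ecss_def)
    from assms this True interpret irrelevant_edge_in_2ecss V E H u v
      by (rule irrelevant_edge_in_2ecss.intro)
    obtain g where "g \<noteq> {u, v}" and F: "spanning_2ec V E (insert g (H - {{u, v}}))"
      using exists_exchange_edge by blast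
    have "finite H" using H_simple by (rule simple_graph_finite_edges)
    then have "card (insert g (H - {{u, v}})) \<le> card H"
      using card_Diff1_less[OF _ True] by (simp add: card_insert_if)
    with H F have "min_2ecss V E (insert g (H - {{u, v}}))"
      unfolding min_2ecss_def by (meson order_trans)
    moreover have "{u, v} \<notin> insert g (H - {{u, v}})" using \<open>g \<noteq> {u, v}\<close> by simp
    ultimately show ?thesis by blast
  qed
qed

end
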